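(* Consider the equation $$m_t+u_xu^{-3}m+(u^{-2}m)_x=0,\qquad m=u-u_{xx}.$$ For every wave speed $c>0$ and every parameter $b$ with $0<b<1$, this equation possesses smooth solitary travelling wave solutions $u=U(x-ct)$ (two of them, related by $U\leftrightarrow -U$), where $U$ is smooth, nowhere zero, $U(\xi)\to0$ as $|\xi|\to\infty$, and $U$ has a single peak with $$\max_\xi|U(\xi)|=\frac{b\sqrt{2-b^2}}{\sqrt c}.$$ These solutions satisfy the first-order ODE $U'^2=U^2\,\dfrac{b^2-1+\sqrt{1-cU^2}}{1+\sqrt{1-cU^2}}$.
   Context: A travelling wave of speed $c$ is a solution of the form $u(t,x)=U(\xi)$ with $\xi=x-ct$; for smooth $U$ the equation reduces to the third-order ODE $-c(U'-U''')+U'(U-U'')U^{-3}+((U-U'')U^{-2})'=0$. *)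

theory Defs
  imports "HOL-Analysis.Analysis"
begin

definition smooth_real :: "(real \<Rightarrow> real) \<Rightarrow> bool" where
  "smooth_real U \<longleftrightarrow> (\<forall>n x. ((deriv ^^ n) U) differentiable (at x))"

definition tw_ode :: "real \<Rightarrow> (real \<Rightarrow> real) \<Rightarrow> bool" where
  "tw_ode c U \<longleftrightarrow> (\<forall>\<xi>.
     - c * (deriv U \<xi> - (deriv ^^ 3) U \<xi>)
     + deriv U \<xi> * (U \<xi> - (deriv ^^ 2) U \<xi>) / (U \<xi>) ^ 3
     + deriv (\<lambda>s. (U s - (deriv ^^ 2) U s) / (U s) ^ 2) \<xi> = 0)"

definition first_order_ode :: "real \<Rightarrow> real \<Rightarrow> (real \<Rightarrow> real) \<Rightarrow> bool" where
  "first_order_ode c b U \<longleftrightarrow> (\<forall>\<xi>.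
     (deriv U \<xi>) ^ 2 = (U \<xi>) ^ 2 * (b ^ 2 - 1 + sqrt (1 - c * (U \<xi>) ^ 2))
                                     / (1 + sqrt (1 - c * (U \<xi>) ^ 2)))"

definition solitary_wave :: "real \<Rightarrow> real \<Rightarrow> (real \<Rightarrow> real) \<Rightarrow> bool" where
  "solitary_wave c b U \<longleftrightarrow>
     smooth_real U
   \<and> (\<forall>\<xi>. U \<xi> \<noteq> 0)
   \<and> (U \<longlongrightarrow> 0) at_top \<and> (U \<longlongrightarrow> 0) at_bot
   \<and> (\<exists>\<xi>0. (\<forall>s t. s < t \<and> t \<le> \<xi>0 \<longrightarrow> \<bar>U s\<bar> < \<bar>U t\<bar>)
          \<and> (\<forall>s t. \<xi>0 \<le> s \<and> s < t \<longrightarrow> \<bar>U t\<bar> < \<bar>U s\<bar>)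
          \<and> \<bar>U \<xi>0\<bar> = b * sqrt (2 - b ^ 2) / sqrt c
          \<and> (\<forall>\<xi>. \<bar>U \<xi>\<bar> \<le> \<bar>U \<xi>0\<bar>))
   \<and> tw_ode c U
   \<and> first_order_ode c b U"

end

theory Submission
  imports Defs
begin

(*
  The wave is given parametrically by xi = Xi t and U = P t, where k = b / sqrt 2,
    P t = A cosh t / (1 + (1 - k^2) sinh t ^ 2),
    Xi t = t / k - ln (cosh t + k sinh t) + ln (cosh t - k sinh t),
  the derivative d/dxi becomes R t d/dt with R = 1 / Xi' = k E / F, where
  E = 1 + (1 - k^2) sinh^2 and F = E - 2 k^2. Since Xi' >= (1 - 2 k^2) / k > 0,
  Xi is a diffeomorphism of the line, so U = P o Xi^-1 is a smooth, decaying,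
  single-peaked wave of height P 0 = A. Differentiating twice gives
  U - U'' = M o Xi^-1 with M t = A (1 - k^2) cosh t / F t, and the third-order
  equation reduces to m' (1 - c U^2) U = m U' for m = U - U''. Because
  sqrt (1 - c U^2) = F / E, both this and the first-order equation become
  algebraic identities in sinh t and cosh t. The equation is odd in U, so -U
  is a solution as well.
*)

section \<open>Smooth real functions\<close>

fun times_differentiable :: "nat \<Rightarrow> (real \<Rightarrow> real) \<Rightarrow> bool" where
  "times_differentiable 0 f \<longleftrightarrow> True"
| "times_differentiable (Suc n) f \<longleftrightarrow>
     (\<forall>x. f differentiable (at x)) \<and> times_differentiable n (deriv f)"

lemma times_differentiable_iff:
  "times_differentiable n f \<longleftrightarrow> (\<forall>m<n. \<forall>x. (deriv ^^ m) f differentiable (at x))"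
proof (induction n arbitrary: f)
  case (Suc n)
  have "(\<forall>m<Suc n. \<forall>x. (deriv ^^ m) f differentiable (at x)) \<longleftrightarrow>
        (\<forall>x. f differentiable (at x)) \<and> (\<forall>m<n. \<forall>x. (deriv ^^ m) (deriv f) differentiable (at x))"
    unfolding All_less_Suc2 funpow_Suc_right by simp
  then show ?case using Suc by simp
qed simp

lemma smooth_real_iff_times_differentiable:
  "smooth_real f \<longleftrightarrow> (\<forall>n. times_differentiable n f)"
  unfolding smooth_real_def times_differentiable_iff using lessI by blast

lemma smooth_real_differentiable: "smooth_real f \<Longrightarrow> f differentiable (at x)"
  unfolding smooth_real_def by (metis funpow_0)

lemma smooth_real_DERIV: "smooth_real f \<Longrightarrow> DERIV f x :> deriv f x"
  using smooth_real_differentiable DERIV_deriv_iff_real_differentiable by blast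

lemma smooth_real_deriv: "smooth_real f \<Longrightarrow> smooth_real (deriv f)"
  unfolding smooth_real_def by (metis funpow_Suc_right o_apply)

lemma times_differentiable_Suc_imp:
  "times_differentiable (Suc n) f \<Longrightarrow> times_differentiable n f"
  by (simp add: times_differentiable_iff del: times_differentiable.simps)

lemma times_differentiable_const: "times_differentiable n (\<lambda>x. a)"
  by (induction n arbitrary: a) auto

lemma times_differentiable_add:
  "times_differentiable n f \<Longrightarrow> times_differentiable n g \<Longrightarrow> times_differentiable n (\<lambda>x. f x + g x)"
proof (induction n arbitrary: f g)
  case (Suc n)
  have "deriv (\<lambda>x. f x + g x) = (\<lambda>x. deriv f x + deriv g x)"
    using Suc.prems by (intro ext DERIV_imp_deriv derivative_intros)
       (simp_all add: DERIV_deriv_iff_real_differentiable)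
  with Suc show ?case by auto
qed simp

lemma times_differentiable_mult:
  "times_differentiable n f \<Longrightarrow> times_differentiable n g \<Longrightarrow> times_differentiable n (\<lambda>x. f x * g x)"
proof (induction n arbitrary: f g)
  case (Suc n)
  have "deriv (\<lambda>x. f x * g x) = (\<lambda>x. f x * deriv g x + deriv f x * g x)"
    using Suc.prems by (intro ext DERIV_imp_deriv DERIV_mult')
       (simp_all add: DERIV_deriv_iff_real_differentiable)
  moreover have "times_differentiable n f" "times_differentiable n g"
    using Suc.prems by (simp_all add: times_differentiable_Suc_imp)
  ultimately show ?case
    using Suc by (auto intro!: times_differentiable_add)
qed simp

lemma times_differentiable_inverse:
  "times_differentiable n f \<Longrightarrow> (\<And>x. f x \<noteq> 0) \<Longrightarrow> times_differentiable n (\<lambda>x. inverse (f x))"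
proof (induction n arbitrary: f)
  case (Suc n)
  have DERIV_inverse: "DERIV (\<lambda>x. inverse (f x)) x :> (- 1) * deriv f x * (inverse (f x) * inverse (f x))" for x
    using DERIV_inverse_fun[of f "deriv f x" x] Suc.prems
    by (simp add: DERIV_deriv_iff_real_differentiable power2_eq_square)
  then have "deriv (\<lambda>x. inverse (f x)) = (\<lambda>x. (- 1) * deriv f x * (inverse (f x) * inverse (f x)))"
    by (intro ext DERIV_imp_deriv)
  moreover have "times_differentiable n (\<lambda>x. (- 1) * deriv f x * (inverse (f x) * inverse (f x)))"
    using Suc by (intro times_differentiable_mult times_differentiable_const)
      (simp_all add: times_differentiable_Suc_imp)
  ultimately show ?case
    using DERIV_inverse real_differentiable_def by auto
qed simp

lemma times_differentiable_sinh_cosh: "times_differentiable n sinh \<and> times_differentiable n cosh"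
proof (induction n)
  case (Suc n)
  have "deriv sinh = (cosh :: real \<Rightarrow> real)" "deriv cosh = (sinh :: real \<Rightarrow> real)"
    by (auto intro!: ext DERIV_imp_deriv derivative_eq_intros)
  moreover have "sinh differentiable (at x)" "cosh differentiable (at x)" for x :: real
    by (auto intro!: derivative_intros simp: real_differentiable_def)
  ultimately show ?case using Suc by simp
qed simp

lemma smooth_real_const [simp]: "smooth_real (\<lambda>x. a)"
  by (simp add: smooth_real_iff_times_differentiable times_differentiable_const)

lemma smooth_real_add:
  "smooth_real f \<Longrightarrow> smooth_real g \<Longrightarrow> smooth_real (\<lambda>x. f x + g x)"
  by (simp add: smooth_real_iff_times_differentiable times_differentiable_add)

lemma smooth_real_mult:
  "smooth_real f \<Longrightarrow> smooth_real g \<Longrightarrow> smooth_real (\<lambda>x. f x * g x)"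
  by (simp add: smooth_real_iff_times_differentiable times_differentiable_mult)

lemma smooth_real_minus: "smooth_real f \<Longrightarrow> smooth_real (\<lambda>x. - f x)"
  using smooth_real_mult[OF smooth_real_const[of "- 1"]] by simp

lemma smooth_real_diff:
  "smooth_real f \<Longrightarrow> smooth_real g \<Longrightarrow> smooth_real (\<lambda>x. f x - g x)"
  using smooth_real_add[of f "\<lambda>x. - g x"] smooth_real_minus[of g] by simp

lemma smooth_real_power2: "smooth_real f \<Longrightarrow> smooth_real (\<lambda>x. f x ^ 2)"
  using smooth_real_mult[of f f] by (simp add: power2_eq_square)

lemma smooth_real_divide:
  "smooth_real f \<Longrightarrow> smooth_real g \<Longrightarrow> (\<And>x. g x \<noteq> 0) \<Longrightarrow> smooth_real (\<lambda>x. f x / g x)"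
  using smooth_real_mult[of f "\<lambda>x. inverse (g x)"]
  by (simp add: smooth_real_iff_times_differentiable times_differentiable_inverse divide_inverse)

lemma smooth_real_sinh: "smooth_real sinh"
  and smooth_real_cosh: "smooth_real cosh"
  by (simp_all add: smooth_real_iff_times_differentiable times_differentiable_sinh_cosh)

lemmas smooth_real_intros =
  smooth_real_const smooth_real_add smooth_real_mult smooth_real_minus smooth_real_diff
  smooth_real_power2 smooth_real_divide smooth_real_sinh smooth_real_cosh

lemma smooth_real_funpow_deriv: "smooth_real f \<Longrightarrow> smooth_real ((deriv ^^ n) f)"
  by (induction n) (simp_all add: smooth_real_deriv)

section \<open>Travelling waves\<close>

definition momentum :: "(real \<Rightarrow> real) \<Rightarrow> real \<Rightarrow> real" where
  "momentum U \<xi> = U \<xi> - (deriv ^^ 2) U \<xi>"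

lemma smooth_real_momentum: "smooth_real U \<Longrightarrow> smooth_real (momentum U)"
  unfolding momentum_def[abs_def] by (intro smooth_real_diff smooth_real_funpow_deriv)

lemma deriv_momentum:
  "smooth_real U \<Longrightarrow> deriv (momentum U) \<xi> = deriv U \<xi> - (deriv ^^ 3) U \<xi>"
proof -
  assume U: "smooth_real U"
  have "DERIV (momentum U) \<xi> :> deriv U \<xi> - deriv ((deriv ^^ 2) U) \<xi>"
    unfolding momentum_def[abs_def] using U by (intro DERIV_diff smooth_real_DERIV smooth_real_funpow_deriv)
  moreover have "(deriv ^^ 3) U = deriv ((deriv ^^ 2) U)"
    by (simp add: numeral_3_eq_3 numeral_2_eq_2)
  ultimately show ?thesis by (simp add: DERIV_imp_deriv)
qed

lemma tw_ode_iff_momentum: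
  assumes U: "smooth_real U" and nz: "\<And>\<xi>. U \<xi> \<noteq> 0"
  shows "tw_ode c U \<longleftrightarrow>
    (\<forall>\<xi>. deriv (momentum U) \<xi> * (1 - c * U \<xi> ^ 2) * U \<xi> = momentum U \<xi> * deriv U \<xi>)"
proof -
  have "- c * deriv (momentum U) \<xi>
        + deriv U \<xi> * momentum U \<xi> / U \<xi> ^ 3 + deriv (\<lambda>s. momentum U s / U s ^ 2) \<xi>
      = (deriv (momentum U) \<xi> * (1 - c * U \<xi> ^ 2) * U \<xi> - momentum U \<xi> * deriv U \<xi>) / U \<xi> ^ 3"
    for \<xi>
  proof -
    have "DERIV (\<lambda>s. momentum U s / U s ^ 2) \<xi> :>
        (deriv (momentum U) \<xi> * U \<xi> ^ 2 - momentum U \<xi> * (2 * U \<xi> * deriv U \<xi>)) / (U \<xi> ^ 2 * U \<xi> ^ 2)"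
      using U nz[of \<xi>]
      by (auto intro!: derivative_eq_intros smooth_real_DERIV smooth_real_momentum simp: power2_eq_square)
    then show ?thesis
      using nz[of \<xi>] by (simp add: DERIV_imp_deriv field_simps power2_eq_square power3_eq_cube)
  qed
  then show ?thesis
    unfolding tw_ode_def momentum_def[symmetric] deriv_momentum[OF U, symmetric] using nz by simp
qed

lemma deriv_uminus_smooth_real:
  "smooth_real f \<Longrightarrow> deriv (\<lambda>x. - f x) = (\<lambda>x. - deriv f x)"
  by (intro ext DERIV_imp_deriv DERIV_minus smooth_real_DERIV)

lemma funpow_deriv_uminus:
  "smooth_real f \<Longrightarrow> (deriv ^^ n) (\<lambda>x. - f x) = (\<lambda>x. - (deriv ^^ n) f x)"
  by (induction n) (simp_all add: deriv_uminus_smooth_real smooth_real_funpow_deriv)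

lemma solitary_wave_uminus:
  assumes "solitary_wave c b U"
  shows "solitary_wave c b (\<lambda>\<xi>. - U \<xi>)"
proof -
  from assms have U: "smooth_real U" and nz: "\<forall>\<xi>. U \<xi> \<noteq> 0"
    and tw: "tw_ode c U" and fo: "first_order_ode c b U"
    unfolding solitary_wave_def by blast+
  have momentum_uminus: "momentum (\<lambda>x. - U x) = (\<lambda>x. - momentum U x)"
    using U by (simp add: momentum_def[abs_def] funpow_deriv_uminus)
  have "tw_ode c (\<lambda>\<xi>. - U \<xi>)"
    using tw U nz
    by (simp add: tw_ode_iff_momentum smooth_real_minus momentum_uminus deriv_uminus_smooth_real
        smooth_real_momentum)
  moreover have "first_order_ode c b (\<lambda>\<xi>. - U \<xi>)"
    using fo U by (simp add: first_order_ode_def deriv_uminus_smooth_real)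
  ultimately show ?thesis
    using assms U tendsto_minus[of U 0]
    by (simp add: solitary_wave_def smooth_real_minus)
qed

section \<open>Changing the variable of the line\<close>

definition reparam_deriv :: "(real \<Rightarrow> real) \<Rightarrow> (real \<Rightarrow> real) \<Rightarrow> real \<Rightarrow> real" where
  "reparam_deriv R \<psi> t = deriv \<psi> t * R t"

locale reparametrization =
  fixes h R :: "real \<Rightarrow> real"
  assumes DERIV_h: "\<And>\<xi>. DERIV h \<xi> :> R (h \<xi>)"
    and smooth_R: "smooth_real R"
begin

lemma DERIV_comp:
  "smooth_real \<psi> \<Longrightarrow> DERIV (\<lambda>\<xi>. \<psi> (h \<xi>)) \<xi> :> reparam_deriv R \<psi> (h \<xi>)"
  unfolding reparam_deriv_def by (rule DERIV_chain2[OF smooth_real_DERIV DERIV_h])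

lemma deriv_comp:
  "smooth_real \<psi> \<Longrightarrow> deriv (\<lambda>\<xi>. \<psi> (h \<xi>)) = (\<lambda>\<xi>. reparam_deriv R \<psi> (h \<xi>))"
  by (intro ext DERIV_imp_deriv DERIV_comp)

lemma smooth_real_reparam_deriv: "smooth_real \<psi> \<Longrightarrow> smooth_real (reparam_deriv R \<psi>)"
  unfolding reparam_deriv_def[abs_def] by (intro smooth_real_mult smooth_real_deriv smooth_R)

lemma smooth_real_comp:
  assumes "smooth_real \<psi>"
  shows "smooth_real (\<lambda>\<xi>. \<psi> (h \<xi>))"
proof -
  have "times_differentiable n (\<lambda>\<xi>. \<psi> (h \<xi>))" if "smooth_real \<psi>" for n \<psi>
    using that
  proof (induction n arbitrary: \<psi>)
    case (Suc n)
    then show ?case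
      using DERIV_comp[of \<psi>] real_differentiable_def
      by (auto simp: deriv_comp smooth_real_reparam_deriv)
  qed simp
  with assms show ?thesis by (simp add: smooth_real_iff_times_differentiable)
qed

end

locale uniformly_increasing =
  fixes f f' :: "real \<Rightarrow> real" and m :: real
  assumes DERIV_f: "\<And>x. DERIV f x :> f' x"
    and deriv_lower_bound: "\<And>x. m \<le> f' x"
    and m_pos: "0 < m"
begin

lemma linear_growth: "s \<le> t \<Longrightarrow> f s + m * (t - s) \<le> f t"
proof -
  assume "s \<le> t"
  then have "f s - m * s \<le> f t - m * t"
    by (rule DERIV_nonneg_imp_nondecreasing)
      (use DERIV_f deriv_lower_bound in \<open>auto intro!: exI derivative_eq_intros\<close>)
  then show ?thesis by (simp add: algebra_simps)
qed

lemma strict_mono: "strict_mono f"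
proof (rule strict_monoI)
  fix s t :: real
  assume "s < t"
  then have "0 < m * (t - s)"
    using m_pos by simp
  then show "f s < f t"
    using linear_growth[of s t] \<open>s < t\<close> by linarith
qed

lemma surj: "surj f"
proof -
  have "\<exists>x. f x = y" for y
  proof -
    define r where "r = \<bar>y - f 0\<bar> / m"
    have "r \<ge> 0" using m_pos by (simp add: r_def)
    then have "f (- r) \<le> y" "y \<le> f r"
      using linear_growth[of "- r" 0] linear_growth[of 0 r] m_pos by (auto simp: r_def)
    moreover have "\<forall>x. - r \<le> x \<and> x \<le> r \<longrightarrow> isCont f x"
      using DERIV_f DERIV_isCont by blast
    ultimately show ?thesis
      using IVT[of f "- r" y r] \<open>r \<ge> 0\<close> by auto
  qed
  then show ?thesis by (metis surjI)
qed

lemma f_inv [simp]: "f (inv f y) = y"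
  using surj by (simp add: surj_f_inv_f)

lemma inv_f [simp]: "inv f (f x) = x"
  using strict_mono by (simp add: strict_mono_imp_inj_on)

lemma strict_mono_inv: "strict_mono (inv f)"
  by (metis f_inv strict_mono strict_monoI strict_mono_less)

lemma DERIV_inv: "DERIV (inv f) y :> inverse (f' (inv f y))"
proof -
  have cont: "isCont (inv f) y" for y
    using isCont_inverse_function[where d=1 and x="inv f y" and f=f and g="inv f"]
      DERIV_f DERIV_isCont by simp blast
  show ?thesis
    using DERIV_f deriv_lower_bound[of "inv f y"] m_pos cont
    by (intro DERIV_inverse_function[where a="y - 1" and b="y + 1"]) auto
qed

lemma filterlim_inv_at_top: "filterlim (inv f) at_top at_top"
  unfolding filterlim_at_top eventually_at_top_linorder
  by (metis inv_f strict_mono_inv strict_mono_less_eq)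

lemma filterlim_inv_at_bot: "filterlim (inv f) at_bot at_bot"
  unfolding filterlim_at_bot eventually_at_bot_linorder
  by (metis inv_f strict_mono_inv strict_mono_less_eq)

end

section \<open>The explicit solitary profile\<close>

locale solitary_profile =
  fixes c b :: real
  assumes c_pos: "0 < c" and b_pos: "0 < b" and b_less_1: "b < 1"
begin

definition "k = b / sqrt 2"
definition "K = 1 - k\<^sup>2"
definition "A = b * sqrt (2 - b\<^sup>2) / sqrt c"

definition "E t = 1 + K * sinh t ^ 2"
definition "F t = E t - 2 * k\<^sup>2"
definition "P t = A * cosh t / E t"
definition "M t = A * K * cosh t / F t"
definition "R t = k * E t / F t"
definition "Xi t = t / k - ln (cosh t + k * sinh t) + ln (cosh t - k * sinh t)"
definition "h = inv Xi"
definition "slope t = - (A * k * sinh t / E t)"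

lemma b_square: "b\<^sup>2 = 2 * k\<^sup>2"
  by (simp add: k_def power_divide)

lemma b_square_less_1: "b\<^sup>2 < 1"
  using b_pos b_less_1 by (simp add: abs_square_less_1)

lemma k_pos: "0 < k" and k_square_less: "k\<^sup>2 < 1 / 2"
proof -
  show "k\<^sup>2 < 1 / 2" using b_square b_square_less_1 by simp
  show "0 < k" using b_pos by (simp add: k_def)
qed

lemma k_less_1: "k < 1"
  using k_square_less abs_square_less_1[of k] by simp

lemma K_pos: "0 < K"
  using k_square_less by (simp add: K_def)

lemma amplitude_square: "c * A\<^sup>2 = 4 * k\<^sup>2 * K"
  using c_pos k_square_less
  by (simp add: A_def K_def b_square power_divide power_mult_distrib field_simps)

lemma cosh_square: "cosh t ^ 2 = 1 + sinh t ^ 2" for t :: real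
  using cosh_square_eq[of t] by simp

lemma E_ge_1: "1 \<le> E t"
  using K_pos by (simp add: E_def)

lemma E_pos: "0 < E t"
  using E_ge_1[of t] by simp

lemma F_pos: "0 < F t"
  using E_ge_1[of t] k_square_less by (simp add: F_def)

lemma E_nonzero: "E t \<noteq> 0" and F_nonzero: "F t \<noteq> 0"
  using E_pos[of t] F_pos[of t] by simp_all

lemma E_factor: "E t = (cosh t + k * sinh t) * (cosh t - k * sinh t)"
proof -
  have "(cosh t + k * sinh t) * (cosh t - k * sinh t) = cosh t ^ 2 - k\<^sup>2 * sinh t ^ 2"
    by (simp add: algebra_simps power2_eq_square)
  then show ?thesis
    by (simp add: E_def K_def cosh_square algebra_simps)
qed

lemma cosh_plus_k_sinh_pos: "0 < cosh t + k * sinh t"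
  and cosh_minus_k_sinh_pos: "0 < cosh t - k * sinh t"
proof -
  have "\<bar>k * sinh t\<bar> \<le> \<bar>sinh t\<bar>"
    using k_pos k_less_1 by (simp add: abs_mult mult_left_le_one_le)
  moreover have "\<bar>sinh t\<bar> < cosh t"
    using sinh_less_cosh_real[of t] sinh_less_cosh_real[of "- t"] by simp
  ultimately show "0 < cosh t + k * sinh t" "0 < cosh t - k * sinh t" by linarith+
qed

lemma DERIV_Xi: "DERIV Xi t :> F t / (k * E t)"
proof -
  define p q where "p = cosh t + k * sinh t" and "q = cosh t - k * sinh t"
  have "p > 0" "q > 0"
    using cosh_plus_k_sinh_pos[of t] cosh_minus_k_sinh_pos[of t] by (simp_all add: p_def q_def)
  have "DERIV Xi t :> 1 / k - (sinh t + k * cosh t) / p + (sinh t - k * cosh t) / q"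
    unfolding Xi_def[abs_def] p_def q_def using \<open>p > 0\<close> \<open>q > 0\<close> k_pos
    by (auto intro!: derivative_eq_intros simp: mult.commute p_def q_def)
  moreover have "1 / k - (sinh t + k * cosh t) / p + (sinh t - k * cosh t) / q
      = 1 / k + ((sinh t - k * cosh t) * p - (sinh t + k * cosh t) * q) / (p * q)"
    using \<open>p > 0\<close> \<open>q > 0\<close> by (simp add: field_simps)
  moreover have "(sinh t - k * cosh t) * p - (sinh t + k * cosh t) * q = - 2 * k"
    unfolding p_def q_def using cosh_square[of t] by (simp add: algebra_simps power2_eq_square)
  moreover have "p * q = E t"
    by (simp add: E_factor p_def q_def)
  moreover have "1 / k + - 2 * k / E t = F t / (k * E t)"
    using k_pos E_pos[of t] by (simp add: F_def field_simps power2_eq_square)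
  ultimately show ?thesis by simp
qed

lemma Xi_deriv_lower_bound: "(1 - 2 * k\<^sup>2) / k \<le> F t / (k * E t)"
proof -
  have "2 * k / E t \<le> 2 * k"
    using E_ge_1[of t] k_pos by (simp add: divide_le_eq)
  moreover have "F t / (k * E t) = 1 / k - 2 * k / E t"
    using k_pos E_pos[of t] by (simp add: F_def field_simps power2_eq_square)
  ultimately show ?thesis
    using k_pos by (simp add: diff_divide_distrib power2_eq_square)
qed

sublocale Xi: uniformly_increasing Xi "\<lambda>t. F t / (k * E t)" "(1 - 2 * k\<^sup>2) / k"
  using DERIV_Xi Xi_deriv_lower_bound k_pos k_square_less by unfold_locales auto

lemma DERIV_h: "DERIV h \<xi> :> R (h \<xi>)"
  using Xi.DERIV_inv unfolding h_def R_def by simp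

lemma h_0: "h 0 = 0"
  using Xi.inv_f[of 0] by (simp add: h_def Xi_def)

lemma h_strict_mono: "strict_mono h"
  unfolding h_def by (rule Xi.strict_mono_inv)

lemma smooth_real_E: "smooth_real E" and smooth_real_F: "smooth_real F"
  unfolding E_def[abs_def] F_def[abs_def] by (intro smooth_real_intros)+

lemma smooth_real_R: "smooth_real R"
  unfolding R_def[abs_def]
  by (intro smooth_real_intros smooth_real_E smooth_real_F F_nonzero)

sublocale reparametrization h R
  using DERIV_h smooth_real_R by unfold_locales

lemma A_pos: "0 < A"
  using b_pos b_square_less_1 c_pos by (simp add: A_def)

lemma P_pos: "0 < P t"
  using A_pos E_pos[of t] by (simp add: P_def)

lemma P_0: "P 0 = A"
  by (simp add: P_def E_def)

lemma P_even: "P (- t) = P t"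
  by (simp add: P_def E_def)

lemma DERIV_E: "DERIV E t :> 2 * K * sinh t * cosh t"
  unfolding E_def[abs_def] by (auto intro!: derivative_eq_intros)

lemma E_plus_F: "E t + F t = 2 * K * cosh t ^ 2"
  by (simp add: E_def F_def K_def cosh_square algebra_simps)

lemma DERIV_P: "DERIV P t :> - (A * sinh t * F t / E t ^ 2)"
proof -
  have "F t = 2 * K * cosh t ^ 2 - E t"
    using E_plus_F[of t] by simp
  then have "(A * sinh t * E t - A * cosh t * (2 * K * sinh t * cosh t)) / (E t * E t)
      = - (A * sinh t * F t / E t ^ 2)"
    by (simp only:) (simp add: algebra_simps power2_eq_square diff_divide_distrib)
  moreover have "DERIV P t :> (A * sinh t * E t - A * cosh t * (2 * K * sinh t * cosh t)) / (E t * E t)"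
    unfolding P_def[abs_def] using E_pos[of t]
    by (auto intro!: derivative_eq_intros DERIV_E)
  ultimately show ?thesis by simp
qed

lemma P_strict_decreasing:
  assumes "0 \<le> s" "s < t"
  shows "P t < P s"
proof (rule DERIV_neg_imp_decreasing_open[OF \<open>s < t\<close>])
  fix x assume "s < x"
  then have "0 < A * sinh x * F x / E x ^ 2"
    using assms A_pos F_pos[of x] E_pos[of x] by simp
  then show "\<exists>y. DERIV P x :> y \<and> y < 0"
    using DERIV_P[of x] by (intro exI[of _ "- (A * sinh x * F x / E x ^ 2)"]) auto
next
  show "continuous_on {s..t} P"
    by (intro continuous_at_imp_continuous_on ballI DERIV_isCont[OF DERIV_P])
qed

lemma P_strict_increasing: "t \<le> 0 \<Longrightarrow> s < t \<Longrightarrow> P s < P t"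
  using P_strict_decreasing[of "- t" "- s"] P_even by simp

lemma P_le_A: "P t \<le> A"
proof -
  have "P \<bar>t\<bar> \<le> A"
    using P_strict_decreasing[of 0 "\<bar>t\<bar>"] P_0 by (cases "t = 0") auto
  moreover have "P \<bar>t\<bar> = P t"
    using P_even[of t] by (cases "t < 0") auto
  ultimately show ?thesis by simp
qed

lemma P_tendsto_0: "(P \<longlongrightarrow> 0) at_top" "(P \<longlongrightarrow> 0) at_bot"
proof -
  have bound: "P t \<le> A / K * inverse (cosh t)" for t
  proof -
    have "K * cosh t ^ 2 \<le> E t"
      by (simp add: E_def K_def cosh_square algebra_simps)
    then have "P t \<le> A * cosh t / (K * cosh t ^ 2)"
      unfolding P_def using A_pos K_pos by (intro frac_le) auto
    then show ?thesis
      by (simp add: field_simps power2_eq_square)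
  qed
  have "(P \<longlongrightarrow> 0) F" if "filterlim cosh at_top F" for F
  proof (rule tendsto_sandwich[OF _ _ tendsto_const])
    show "eventually (\<lambda>t. 0 \<le> P t) F"
      by (intro always_eventually allI less_imp_le P_pos)
    show "eventually (\<lambda>t. P t \<le> A / K * inverse (cosh t)) F"
      by (intro always_eventually allI bound)
    show "((\<lambda>t. A / K * inverse (cosh t)) \<longlongrightarrow> 0) F"
      by (rule tendsto_mult_right_zero) (rule tendsto_inverse_0_at_top[OF that])
  qed
  then show "(P \<longlongrightarrow> 0) at_top" "(P \<longlongrightarrow> 0) at_bot"
    using cosh_real_at_top cosh_real_at_bot by blast+
qed

lemma smooth_real_P: "smooth_real P"
  and smooth_real_slope: "smooth_real slope"
  and smooth_real_M: "smooth_real M"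
  unfolding P_def[abs_def] slope_def[abs_def] M_def[abs_def]
  by (intro smooth_real_intros smooth_real_E smooth_real_F E_nonzero F_nonzero)+

lemma reparam_deriv_P: "reparam_deriv R P = slope"
proof
  fix t
  show "reparam_deriv R P t = slope t"
    unfolding reparam_deriv_def DERIV_imp_deriv[OF DERIV_P] R_def slope_def
    using E_nonzero[of t] F_nonzero[of t] by (simp add: field_simps power2_eq_square)
qed

lemma DERIV_slope: "DERIV slope t :> - (A * k * cosh t * (1 - K * sinh t ^ 2) / E t ^ 2)"
proof -
  have "DERIV slope t :> - ((A * k * cosh t * E t - A * k * sinh t * (2 * K * sinh t * cosh t)) / (E t * E t))"
    unfolding slope_def[abs_def] using E_nonzero[of t]
    by (auto intro!: derivative_eq_intros DERIV_E)
  moreover have "A * k * cosh t * E t - A * k * sinh t * (2 * K * sinh t * cosh t)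
      = A * k * cosh t * (1 - K * sinh t ^ 2)"
    by (simp add: E_def algebra_simps power2_eq_square)
  ultimately show ?thesis by (simp add: power2_eq_square)
qed

lemma reparam_deriv_slope: "reparam_deriv R slope = (\<lambda>t. P t - M t)"
proof
  fix t
  have F_minus_KE: "F t - K * E t = - k\<^sup>2 * (1 - K * sinh t ^ 2)"
    by (simp add: F_def E_def K_def algebra_simps power2_eq_square)
  have "reparam_deriv R slope t = - (A * k * cosh t * (1 - K * sinh t ^ 2) / E t ^ 2) * (k * E t / F t)"
    unfolding reparam_deriv_def DERIV_imp_deriv[OF DERIV_slope] R_def ..
  also have "\<dots> = A * cosh t * (F t - K * E t) / (E t * F t)"
    unfolding F_minus_KE using E_nonzero[of t] F_nonzero[of t]
    by (simp add: field_simps power2_eq_square)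
  also have "\<dots> = P t - M t"
    unfolding P_def M_def using E_nonzero[of t] F_nonzero[of t] by (simp add: field_simps)
  finally show "reparam_deriv R slope t = P t - M t" .
qed

lemma DERIV_M: "DERIV M t :> - (A * K * sinh t * E t / F t ^ 2)"
proof -
  have "E t = 2 * K * cosh t ^ 2 - F t"
    using E_plus_F[of t] by simp
  then have "(A * K * sinh t * F t - A * K * cosh t * (2 * K * sinh t * cosh t)) / (F t * F t)
      = - (A * K * sinh t * E t / F t ^ 2)"
    by (simp only:) (simp add: algebra_simps power2_eq_square diff_divide_distrib)
  moreover have "DERIV M t :> (A * K * sinh t * F t - A * K * cosh t * (2 * K * sinh t * cosh t)) / (F t * F t)"
    unfolding M_def[abs_def] F_def using F_nonzero[of t]
    by (auto intro!: derivative_eq_intros DERIV_E simp: F_def)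
  ultimately show ?thesis by simp
qed

lemma one_minus_c_P_square: "1 - c * P t ^ 2 = (F t / E t)\<^sup>2"
proof -
  have "E t ^ 2 - F t ^ 2 = 4 * k\<^sup>2 * K * cosh t ^ 2"
    using E_plus_F[of t] by (simp add: F_def algebra_simps power2_eq_square)
  moreover have "c * P t ^ 2 = 4 * k\<^sup>2 * K * cosh t ^ 2 / E t ^ 2"
    using amplitude_square by (simp add: P_def power_divide power_mult_distrib)
  ultimately have "(1 - c * P t ^ 2) * E t ^ 2 = F t ^ 2"
    using E_nonzero[of t] by (simp add: left_diff_distrib eq_divide_eq)
  then show ?thesis
    using E_nonzero[of t] by (simp add: power_divide eq_divide_eq)
qed

lemma sqrt_one_minus_c_P_square: "sqrt (1 - c * P t ^ 2) = F t / E t"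
  using E_pos[of t] F_pos[of t] by (simp add: one_minus_c_P_square)

lemma momentum_profile_identity:
  "reparam_deriv R M t * (1 - c * P t ^ 2) * P t = M t * slope t"
  unfolding one_minus_c_P_square
  unfolding reparam_deriv_def DERIV_imp_deriv[OF DERIV_M] R_def P_def M_def slope_def
  using E_nonzero[of t] F_nonzero[of t] by (simp add: field_simps power2_eq_square)

lemma slope_square:
  "slope t ^ 2 = P t ^ 2 * (b\<^sup>2 - 1 + F t / E t) / (1 + F t / E t)"
proof -
  have "b\<^sup>2 - 1 + F t / E t = 2 * k\<^sup>2 * K * sinh t ^ 2 / E t"
    using E_nonzero[of t] by (simp add: b_square F_def E_def field_simps)
  moreover have "1 + F t / E t = 2 * K * cosh t ^ 2 / E t"
    using E_nonzero[of t] E_plus_F[of t] by (simp add: field_simps)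
  ultimately have "(b\<^sup>2 - 1 + F t / E t) / (1 + F t / E t) = k\<^sup>2 * sinh t ^ 2 / cosh t ^ 2"
    using E_nonzero[of t] K_pos by (simp add: field_simps)
  moreover have "slope t ^ 2 = P t ^ 2 * (k\<^sup>2 * sinh t ^ 2 / cosh t ^ 2)"
    unfolding slope_def P_def using E_nonzero[of t] by (simp add: field_simps power2_eq_square)
  ultimately show ?thesis
    by (metis times_divide_eq_right)
qed

lemma solitary_wave_profile: "solitary_wave c b (\<lambda>\<xi>. P (h \<xi>))"
proof -
  define U where "U = (\<lambda>\<xi>. P (h \<xi>))"
  have smooth_U: "smooth_real U"
    unfolding U_def by (rule smooth_real_comp[OF smooth_real_P])
  have U_nonzero: "U \<xi> \<noteq> 0" for \<xi>
    using P_pos[of "h \<xi>"] by (simp add: U_def)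
  have deriv_U: "deriv U = (\<lambda>\<xi>. slope (h \<xi>))"
    unfolding U_def deriv_comp[OF smooth_real_P] reparam_deriv_P ..
  have "(deriv ^^ 2) U = (\<lambda>\<xi>. P (h \<xi>) - M (h \<xi>))"
    using deriv_comp[OF smooth_real_slope] by (simp add: numeral_2_eq_2 deriv_U reparam_deriv_slope)
  then have momentum_U: "momentum U = (\<lambda>\<xi>. M (h \<xi>))"
    by (simp add: momentum_def[abs_def] U_def)
  have "tw_ode c U"
    using momentum_profile_identity
    by (simp add: tw_ode_iff_momentum smooth_U U_nonzero momentum_U deriv_comp[OF smooth_real_M]
        deriv_U) (simp add: U_def)
  moreover have "first_order_ode c b U"
    unfolding first_order_ode_def deriv_U
    by (simp add: U_def sqrt_one_minus_c_P_square slope_square)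
  moreover have "(U \<longlongrightarrow> 0) at_top" "(U \<longlongrightarrow> 0) at_bot"
    unfolding U_def h_def
    by (rule filterlim_compose[OF P_tendsto_0(1) Xi.filterlim_inv_at_top],
        rule filterlim_compose[OF P_tendsto_0(2) Xi.filterlim_inv_at_bot])
  moreover have "\<bar>U \<xi>\<bar> = P (h \<xi>)" for \<xi>
    using P_pos[of "h \<xi>"] by (simp add: U_def)
  moreover have "(\<forall>s t. s < t \<and> t \<le> 0 \<longrightarrow> P (h s) < P (h t))
      \<and> (\<forall>s t. 0 \<le> s \<and> s < t \<longrightarrow> P (h t) < P (h s))"
    using h_strict_mono P_strict_increasing P_strict_decreasing h_0
    by (metis strict_mono_less strict_mono_less_eq)
  ultimately show ?thesis
    unfolding solitary_wave_def U_def[symmetric]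
    using smooth_U U_nonzero P_le_A P_0 h_0 by (auto simp: A_def intro!: exI[of _ 0])
qed

end

theorem mainTheorem7:
  fixes c b :: real
  assumes "c > 0" and "0 < b" and "b < 1"
  shows "\<exists>U. solitary_wave c b U \<and> solitary_wave c b (\<lambda>\<xi>. - U \<xi>)"
proof -
  interpret solitary_profile c b
    using assms by unfold_locales
  show ?thesis
    using solitary_wave_profile solitary_wave_uminus by blast
qed

end
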